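(* Fix a round $r$. For clients $i=1,\dots,N$ let $(Z_i,E_i,X_{i,r},A_{i,r},\Delta_{i,r})$ be random, mutually independent across $i$, with $E_i,A_{i,r}\in\{0,1\}$, $A_{i,r}=0$ when $E_i=0$, and $\Delta_{i,r}\in\mathbb R^m$. Let $\mathcal E:=\{i:E_i=1\}$, $\pi_{i,r}^{\mathrm{part}}:=P(A_{i,r}=1\mid E_i=1,Z_i,X_{i,r})$, let $b$ be a map into $\mathbb R^q$ with $E[b(Z_i)]=\mu_b$ for all $i$ ($\mu_b$ known), and let $\bar\Delta_r:=\frac1N\sum_iE[\Delta_{i,r}]$. Let $q_i\ge0$, $i\in\mathcal E$, be weights that are measurable functions of $(E_j,Z_j)_{j=1}^N$ and satisfy $\sum_{i\in\mathcal E}q_i=1$ and $\sum_{i\in\mathcal E}q_ib(Z_i)=\mu_b$ (feasible because $\mu_b$ is assumed to lie in the convex hull of $\{b(Z_i):i\in\mathcal E\}$). Let $(\hat\pi_{i,r}^{\mathrm{part},(n)})_{n\ge1}$ be a sequence of participation-propensity estimators, and define \[ \hat{\bar\Delta}_r^{\mathrm{cal},(n)}:=\sum_{i:A_{i,r}=1}q_i\frac{\Delta_{i,r}}{\hat\pi_{i,r}^{\mathrm{part},(n)}}. \] Assume: (participation ignorability) $E[\Delta_{i,r}\mid Z_i,X_{i,r},E_i=1,A_{i,r}=1]=E[\Delta_{i,r}\mid Z_i,X_{i,r},E_i=1]$; (enrollment ignorability) $E[\Delta_{i,r}\mid Z_i,E_i=1]=E[\Delta_{i,r}\mid Z_i]$;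 (moment sufficiency) there is a matrix $B_r$ with $E[\Delta_{i,r}\mid Z_i]=B_rb(Z_i)$; (overlap and consistency) there is $c_r>0$ with $\pi_{i,r}^{\mathrm{part}}\ge c_r$ and $\hat\pi_{i,r}^{\mathrm{part},(n)}\in[c_r,1]$ for all enrolled $i$ and all $n$, and $E[\max_{i:E_i=1}|\hat\pi_{i,r}^{\mathrm{part},(n)}-\pi_{i,r}^{\mathrm{part}}|]\to0$; (bounded moment) $E[(\sum_{i:A_{i,r}=1}q_i\|\Delta_{i,r}\|_2)^2]<\infty$. Then \[ E[\hat{\bar\Delta}_r^{\mathrm{cal},(n)}]-\bar\Delta_r\to0\quad(n\to\infty). \]
   Context: $Z_i$: pre-enrollment covariates; $X_{i,r}$: pre-round covariates; $E_i$: enrollment indicator; $A_{i,r}$: round-$r$ inclusion indicator; $\Delta_{i,r}$: client update. This is the limited-information regime in which only enrolled clients' covariates plus the population moment $\mu_b$ are known. *)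

theory Defs
  imports "HOL-Probability.Probability"
begin

definition gen_sigma :: "'a measure \<Rightarrow> ('a \<Rightarrow> 'b) \<Rightarrow> 'b measure \<Rightarrow> 'a measure" where
  "gen_sigma M f N = vimage_algebra (space M) f N"

definition vec_cond_exp :: "'a measure \<Rightarrow> 'a measure \<Rightarrow> ('a \<Rightarrow> real^'m) \<Rightarrow> 'a \<Rightarrow> real^'m" where
  "vec_cond_exp M F f = (\<lambda>w. \<chi> k. real_cond_exp M F (\<lambda>v. f v $ k) w)"

text \<open>Participation propensity P(A_i = 1 | Z_i, X_i, E_i); on the event E_i = 1 this is
  P(A_i = 1 | E_i = 1, Z_i, X_i).\<close>
definition pi_part :: "'a measure \<Rightarrow> 'z measure \<Rightarrow> 'x measure \<Rightarrow>
    (nat \<Rightarrow> 'a \<Rightarrow> 'z) \<Rightarrow> (nat \<Rightarrow> 'a \<Rightarrow> 'x) \<Rightarrow> (nat \<Rightarrow> 'a \<Rightarrow> real) \<Rightarrow> (nat \<Rightarrow> 'a \<Rightarrow> real)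
    \<Rightarrow> nat \<Rightarrow> 'a \<Rightarrow> real" where
  "pi_part M SZ SX Z X E A i =
     real_cond_exp M (gen_sigma M (\<lambda>w. (Z i w, X i w, E i w)) (SZ \<Otimes>\<^sub>M SX \<Otimes>\<^sub>M borel))
       (\<lambda>w. if A i w = 1 then 1 else 0)"

definition cal_est :: "nat \<Rightarrow> (nat \<Rightarrow> 'a \<Rightarrow> real) \<Rightarrow> (nat \<Rightarrow> 'a \<Rightarrow> real) \<Rightarrow> (nat \<Rightarrow> 'a \<Rightarrow> real)
    \<Rightarrow> (nat \<Rightarrow> 'a \<Rightarrow> real^'m) \<Rightarrow> 'a \<Rightarrow> real^'m" where
  "cal_est N A q pihat \<Delta> w =
     (\<Sum>i\<in>{i\<in>{1..N}. A i w = 1}. (q i w / pihat i w) *\<^sub>R \<Delta> i w)"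

end

theory Submission
  imports Defs
begin

(* The calibrated estimator is compared with its oracle version, in which the estimated
   propensities are replaced by the true participation propensities
   pi_i = P(A_i = 1 | Z_i, X_i, E_i).

   The oracle is exactly unbiased. For a single client i, the weight q_i / pi_i depends on
   (Z_i, X_i, E_i) and on the other clients only, and the other clients are independent of
   client i; hence one may condition on (Z_i, X_i, E_i) inside E[A_i Delta_i q_i / pi_i].
   Participation ignorability turns this into E[Delta_i q_i], and enrollment ignorability
   together with moment sufficiency into E[q_i B b(Z_i)]. Summing over the enrolled clients,
   the calibration constraint sum_i q_i b(Z_i) = mu_b yields B mu_b, which is also the mean of
   the E[Delta_i].

   The estimator differs from the oracle by at most S D_n / c^2, where
   S = sum_{A_i = 1} q_i |Delta_i| is square integrable and D_n in [0, 1] is the largest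
   propensity error, which tends to 0 in mean. Then E[S D_n] -> 0 because
   |s| d <= t s^2 + d / t for every t > 0. *)

lemma borel_measurable_vec_nth [measurable (raw)]:
  "f \<in> borel_measurable M \<Longrightarrow> (\<lambda>x. (f x :: real^'n) $ k) \<in> borel_measurable M"
  by (erule measurable_compose) (intro borel_measurable_continuous_onI continuous_intros)

lemma borel_measurable_matrix_vector_mult [measurable (raw)]:
  "f \<in> borel_measurable M \<Longrightarrow> (\<lambda>x. (B :: real^'n^'m) *v f x) \<in> borel_measurable M"
  by (erule measurable_compose)
    (intro borel_measurable_continuous_onI linear_continuous_on matrix_vector_mul_bounded_linear)

lemma borel_measurable_Max_insert [measurable (raw)]:
  fixes f :: "'i \<Rightarrow> 'a \<Rightarrow> real"
  assumes "finite I" "\<And>i. i \<in> I \<Longrightarrow> f i \<in> borel_measurable M"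
  shows "(\<lambda>x. Max (insert c ((\<lambda>i. f i x) ` I))) \<in> borel_measurable M"
proof (cases "I = {}")
  case False
  then have "(\<lambda>x. Max (insert c ((\<lambda>i. f i x) ` I))) = (\<lambda>x. max c (Max ((\<lambda>i. f i x) ` I)))"
    using assms(1) by simp
  then show ?thesis using assms by simp
qed simp

lemma integrable_scaleR_bounded:
  fixes f :: "'a \<Rightarrow> 'b::{banach, second_countable_topology}"
  assumes "integrable M f" "g \<in> borel_measurable M" "AE x in M. \<bar>g x\<bar> \<le> C"
  shows "integrable M (\<lambda>x. g x *\<^sub>R f x)"
proof (rule Bochner_Integration.integrable_bound[of _ "\<lambda>x. C *\<^sub>R f x"])
  show "AE x in M. norm (g x *\<^sub>R f x) \<le> norm (C *\<^sub>R f x)"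
    using assms(3) by eventually_elim (auto intro: mult_right_mono)
qed (use assms in auto)

lemma integrable_mult_bounded:
  fixes f g :: "'a \<Rightarrow> real"
  assumes "integrable M f" "g \<in> borel_measurable M" "AE x in M. \<bar>g x\<bar> \<le> C"
  shows "integrable M (\<lambda>x. f x * g x)"
  using integrable_scaleR_bounded[OF assms] by (simp add: mult.commute)

lemma integral_vec_nth:
  fixes f :: "'a \<Rightarrow> real^'n"
  shows "integrable M f \<Longrightarrow> (\<integral>x. f x \<partial>M) $ k = (\<integral>x. f x $ k \<partial>M)"
  using integral_bounded_linear[OF bounded_linear_vec_nth] by metis

lemma vec_cond_exp_nth: "vec_cond_exp M F f w $ k = real_cond_exp M F (\<lambda>v. f v $ k) w"
  by (simp add: vec_cond_exp_def)

section \<open>\<sigma>-algebras generated by maps and their joins\<close>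

lemma measurable_vimage_algebra_factor:
  assumes "\<psi> \<in> M \<rightarrow>\<^sub>M T" "h \<in> T \<rightarrow>\<^sub>M S" "\<And>x. x \<in> space M \<Longrightarrow> \<phi> x = h (\<psi> x)"
  shows "\<phi> \<in> vimage_algebra (space M) \<psi> T \<rightarrow>\<^sub>M S"
proof -
  have "(\<lambda>x. h (\<psi> x)) \<in> vimage_algebra (space M) \<psi> T \<rightarrow>\<^sub>M S"
    using assms(1) by (intro measurable_compose[OF measurable_vimage_algebra1 assms(2)])
      (simp add: measurable_def)
  then show ?thesis
    by (rule measurable_cong[THEN iffD1, rotated]) (simp add: assms(3))
qed

lemma subalgebra_vimage_algebra_factor:
  assumes "\<psi> \<in> M \<rightarrow>\<^sub>M T" "h \<in> T \<rightarrow>\<^sub>M S" "\<And>x. x \<in> space M \<Longrightarrow> \<phi> x = h (\<psi> x)"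
  shows "subalgebra (vimage_algebra (space M) \<psi> T) (vimage_algebra (space M) \<phi> S)"
  using sets_image_in_sets[OF space_vimage_algebra measurable_vimage_algebra_factor[OF assms]]
  by (simp add: subalgebra_def)

lemma subalgebra_vimage_algebra:
  "f \<in> M \<rightarrow>\<^sub>M N \<Longrightarrow> subalgebra M (vimage_algebra (space M) f N)"
  using sets_image_in_sets[OF refl] by (auto simp: subalgebra_def)

lemma measurable_vimage_algebra_restrict:
  assumes "j \<in> J" "\<And>j. j \<in> J \<Longrightarrow> U j \<in> M \<rightarrow>\<^sub>M S" "h \<in> S \<rightarrow>\<^sub>M T"
  shows "(\<lambda>x. h (U j x)) \<in> vimage_algebra (space M) (\<lambda>x. \<lambda>j\<in>J. U j x) (PiM J (\<lambda>_. S)) \<rightarrow>\<^sub>M T"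
  using assms
  by (intro measurable_vimage_algebra_factor[where h = "\<lambda>u. h (u j)"] measurable_restrict)
    (auto intro: measurable_compose[OF measurable_component_singleton])

lemma subalgebra_vimage_algebra_restrict:
  assumes "j \<in> J" "\<And>j. j \<in> J \<Longrightarrow> U j \<in> M \<rightarrow>\<^sub>M S" "h \<in> S \<rightarrow>\<^sub>M T"
  shows "subalgebra (vimage_algebra (space M) (\<lambda>x. \<lambda>j\<in>J. U j x) (PiM J (\<lambda>_. S)))
    (vimage_algebra (space M) (\<lambda>x. h (U j x)) T)"
  using sets_image_in_sets[OF space_vimage_algebra measurable_vimage_algebra_restrict[OF assms]]
  by (simp add: subalgebra_def)

definition join_algebra :: "'a set \<Rightarrow> 'a measure \<Rightarrow> 'a measure \<Rightarrow> 'a measure" where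
  "join_algebra \<Omega> F G = sigma \<Omega> {a \<inter> b | a b. a \<in> sets F \<and> b \<in> sets G}"

lemma Int_stable_join_generator: "Int_stable {a \<inter> b | a b. a \<in> sets F \<and> b \<in> sets G}"
proof (rule Int_stableI)
  fix x y
  assume "x \<in> {a \<inter> b | a b. a \<in> sets F \<and> b \<in> sets G}"
    and "y \<in> {a \<inter> b | a b. a \<in> sets F \<and> b \<in> sets G}"
  then obtain a b a' b' where "x = a \<inter> b" "y = a' \<inter> b'"
    and "a \<in> sets F" "b \<in> sets G" "a' \<in> sets F" "b' \<in> sets G"
    by auto
  then show "x \<inter> y \<in> {a \<inter> b | a b. a \<in> sets F \<and> b \<in> sets G}"
    by (intro CollectI exI[of _ "a \<inter> a'"] exI[of _ "b \<inter> b'"]) auto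
qed

lemma
  assumes "space F = \<Omega>" "space G = \<Omega>"
  shows space_join_algebra: "space (join_algebra \<Omega> F G) = \<Omega>"
    and sets_join_algebra:
      "sets (join_algebra \<Omega> F G) = sigma_sets \<Omega> {a \<inter> b | a b. a \<in> sets F \<and> b \<in> sets G}"
    and subalgebra_join_algebra_left: "subalgebra (join_algebra \<Omega> F G) F"
    and subalgebra_join_algebra_right: "subalgebra (join_algebra \<Omega> F G) G"
proof -
  let ?\<G> = "{a \<inter> b | a b. a \<in> sets F \<and> b \<in> sets G}"
  have \<G>: "?\<G> \<subseteq> Pow \<Omega>"
    using sets.sets_into_space[of _ F] sets.sets_into_space[of _ G] assms by auto
  show space: "space (join_algebra \<Omega> F G) = \<Omega>"
    unfolding join_algebra_def by (rule space_measure_of[OF \<G>])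
  show sets: "sets (join_algebra \<Omega> F G) = sigma_sets \<Omega> ?\<G>"
    unfolding join_algebra_def by (rule sets_measure_of[OF \<G>])
  have "a \<in> sigma_sets \<Omega> ?\<G>" if "a \<in> sets F" for a
  proof -
    have "a \<inter> \<Omega> \<in> ?\<G>" using that sets.top[of G] assms by blast
    moreover have "a \<inter> \<Omega> = a" using that assms sets.sets_into_space by blast
    ultimately show ?thesis by auto
  qed
  then show "subalgebra (join_algebra \<Omega> F G) F"
    using assms by (auto simp: subalgebra_def space sets)
  have "b \<in> sigma_sets \<Omega> ?\<G>" if "b \<in> sets G" for b
  proof -
    have "\<Omega> \<inter> b \<in> ?\<G>" using that sets.top[of F] assms by blast
    moreover have "\<Omega> \<inter> b = b" using that assms sets.sets_into_space by blast
    ultimately show ?thesis by auto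
  qed
  then show "subalgebra (join_algebra \<Omega> F G) G"
    using assms by (auto simp: subalgebra_def space sets)
qed

lemma subalgebra_join_algebra:
  assumes "subalgebra M F" "subalgebra M G"
  shows "subalgebra M (join_algebra (space M) F G)"
proof -
  have "{a \<inter> b | a b. a \<in> sets F \<and> b \<in> sets G} \<subseteq> sets M"
    using assms by (auto simp: subalgebra_def)
  then show ?thesis
    using assms sets.sigma_sets_subset
    by (auto simp: subalgebra_def space_join_algebra sets_join_algebra)
qed

lemma subalgebra_join_algebra_mono:
  assumes "subalgebra F' F" "space G = space F'"
  shows "subalgebra (join_algebra (space F') F' G) (join_algebra (space F') F G)"
  using assms by (auto simp: subalgebra_def space_join_algebra sets_join_algebra
      intro!: sigma_sets_mono') blast

section \<open>Conditional expectation given a join with an independent \<sigma>-algebra\<close>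

lemma (in prob_space) indep_var_vimage_algebra:
  assumes ind: "indep_var SU U SV V"
    and f: "f \<in> vimage_algebra (space M) U SU \<rightarrow>\<^sub>M N1"
    and g: "g \<in> vimage_algebra (space M) V SV \<rightarrow>\<^sub>M N2"
  shows "indep_var N1 f N2 g"
proof -
  have U: "U \<in> M \<rightarrow>\<^sub>M SU" and V: "V \<in> M \<rightarrow>\<^sub>M SV"
    using ind by (auto intro: indep_var_rv1 indep_var_rv2)
  have fM: "f \<in> M \<rightarrow>\<^sub>M N1" and gM: "g \<in> M \<rightarrow>\<^sub>M N2"
    using measurable_from_subalg[OF subalgebra_vimage_algebra[OF U] f]
      measurable_from_subalg[OF subalgebra_vimage_algebra[OF V] g] .
  have I: "indep_sets (\<lambda>i. sigma_sets (space M)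
      {case_bool U V i -` A \<inter> space M |A. A \<in> sets (case_bool SU SV i)}) UNIV"
    using ind unfolding indep_var_def indep_vars_def by auto
  have "sigma_sets (space M) {case_bool f g i -` A \<inter> space M |A. A \<in> sets (case_bool N1 N2 i)}
      \<subseteq> sigma_sets (space M) {case_bool U V i -` A \<inter> space M |A. A \<in> sets (case_bool SU SV i)}"
    for i
    using measurable_sets[OF f] measurable_sets[OF g]
    by (intro sigma_sets_mono) (auto simp: sets_vimage_algebra split: bool.split)
  then show ?thesis
    unfolding indep_var_def indep_vars_def
    using fM gM by (auto split: bool.split intro!: indep_sets_mono_sets[OF I])
qed

lemma (in prob_space) set_integral_Int_indep:
  fixes f :: "'a \<Rightarrow> real"
  assumes ind: "indep_var SU U SV V"
    and f: "f \<in> borel_measurable (vimage_algebra (space M) U SU)" "integrable M f"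
    and a: "a \<in> sets (vimage_algebra (space M) U SU)"
    and b: "b \<in> sets (vimage_algebra (space M) V SV)"
  shows "(\<integral>x\<in>a \<inter> b. f x \<partial>M) = (\<integral>x\<in>a. f x \<partial>M) * prob b"
proof -
  have V: "V \<in> M \<rightarrow>\<^sub>M SV" using ind by (rule indep_var_rv2)
  have bM: "b \<in> sets M"
    using b sets_image_in_sets[OF refl V] by auto
  have "indep_var borel (\<lambda>x. indicator a x * f x) borel (indicator b :: 'a \<Rightarrow> real)"
    using a b f by (intro indep_var_vimage_algebra[OF ind]) auto
  moreover have "integrable M (\<lambda>x. indicator a x * f x)"
    using a sets_image_in_sets[OF refl indep_var_rv1[OF ind]] integrable_mult_indicator[OF _ f(2)]
    by auto
  moreover have "integrable M (indicator b :: 'a \<Rightarrow> real)"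
    using bM by (simp add: emeasure_eq_measure)
  ultimately have "(\<integral>x. indicator a x * f x * indicator b x \<partial>M)
      = (\<integral>x. indicator a x * f x \<partial>M) * (\<integral>x. indicator b x \<partial>M)"
    by (rule indep_var_lebesgue_integral)
  then show ?thesis
    using bM by (simp add: set_lebesgue_integral_def indicator_inter_arith mult_ac)
qed

lemma set_integral_eq_sigma_sets_Int_stable:
  fixes f g :: "'a \<Rightarrow> real"
  assumes \<G>: "Int_stable \<G>" "\<G> \<subseteq> sets M"
    and fg: "integrable M f" "integrable M g" "(\<integral>x. f x \<partial>M) = (\<integral>x. g x \<partial>M)"
    and eq: "\<And>A. A \<in> \<G> \<Longrightarrow> (\<integral>x\<in>A. f x \<partial>M) = (\<integral>x\<in>A. g x \<partial>M)"
    and A: "A \<in> sigma_sets (space M) \<G>"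
  shows "(\<integral>x\<in>A. f x \<partial>M) = (\<integral>x\<in>A. g x \<partial>M)"
proof -
  have sets: "sigma_sets (space M) \<G> \<subseteq> sets M"
    by (rule sets.sigma_sets_subset[OF \<G>(2)])
  have int: "set_integrable M B h" if "B \<in> sets M" "integrable M h" for B and h :: "'a \<Rightarrow> real"
    using integrable_mult_indicator[OF that] by (simp add: set_integrable_def)
  have "\<G> \<subseteq> Pow (space M)"
    using \<G>(2) sets.sets_into_space by auto
  from \<G>(1) this A show ?thesis
  proof (induct rule: sigma_sets_induct_disjoint)
    case (compl A)
    then have A: "A \<in> sets M" using sets by auto
    have "(\<integral>x\<in>space M - A. h x \<partial>M) = (\<integral>x. h x \<partial>M) - (\<integral>x\<in>A. h x \<partial>M)"
      if "integrable M h" for h :: "'a \<Rightarrow> real"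
    proof -
      have "(space M - A) \<union> A = space M"
        using sets.sets_into_space[OF A] by auto
      then have "(\<integral>x\<in>space M. h x \<partial>M) = (\<integral>x\<in>space M - A. h x \<partial>M) + (\<integral>x\<in>A. h x \<partial>M)"
        using set_integral_Un[of "space M - A" A M h] int A that by auto
      then show ?thesis
        using set_integral_space[OF that] by simp
    qed
    then show ?case using compl fg by simp
  next
    case (union A)
    have A: "\<And>i. A i \<in> sets M" and "(\<Union>i. A i) \<in> sets M"
      using union sets by auto
    moreover have "\<And>i j. i \<noteq> j \<Longrightarrow> A i \<inter> A j = {}"
      using union by (auto simp: disjoint_family_on_def)
    ultimately show ?case
      using lebesgue_integral_countable_add[OF A, of _ f]
        lebesgue_integral_countable_add[OF A, of _ g]
        int fg union by simp
  qed (use \<G> eq in \<open>auto simp: set_lebesgue_integral_def\<close>)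
qed

lemma (in prob_space) set_integral_real_cond_exp_join_indep:
  fixes Y :: "'a \<Rightarrow> real"
  assumes ind: "indep_var SU U SV V"
    and F: "subalgebra (vimage_algebra (space M) U SU) F"
    and Y: "Y \<in> borel_measurable (vimage_algebra (space M) U SU)" "integrable M Y"
    and A: "A \<in> sets (join_algebra (space M) F (vimage_algebra (space M) V SV))"
  shows "(\<integral>x\<in>A. Y x \<partial>M) = (\<integral>x\<in>A. real_cond_exp M F Y x \<partial>M)"
proof -
  let ?U = "vimage_algebra (space M) U SU" and ?V = "vimage_algebra (space M) V SV"
  have MF: "subalgebra M F" and V: "subalgebra M ?V"
    using F ind subalgebra_vimage_algebra[OF indep_var_rv1[OF ind]]
      subalgebra_vimage_algebra[OF indep_var_rv2[OF ind]]
    by (auto simp: subalgebra_def)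
  interpret F: finite_measure_subalgebra M F by unfold_locales (rule MF)
  have int_FY: "integrable M (real_cond_exp M F Y)"
    using Y(2) by (rule F.real_cond_exp_int(1))
  have FY_U: "real_cond_exp M F Y \<in> borel_measurable ?U"
    by (rule measurable_from_subalg[OF F borel_measurable_cond_exp])
  show ?thesis
  proof (rule set_integral_eq_sigma_sets_Int_stable[OF Int_stable_join_generator])
    show "{a \<inter> b | a b. a \<in> sets F \<and> b \<in> sets ?V} \<subseteq> sets M"
      using MF V by (auto simp: subalgebra_def)
    show "(\<integral>x. Y x \<partial>M) = (\<integral>x. real_cond_exp M F Y x \<partial>M)"
      using F.real_cond_exp_int(2)[OF Y(2)] by simp
    show "A \<in> sigma_sets (space M) {a \<inter> b | a b. a \<in> sets F \<and> b \<in> sets ?V}"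
      using A MF by (simp add: sets_join_algebra subalgebra_def)
  next
    fix A assume "A \<in> {a \<inter> b | a b. a \<in> sets F \<and> b \<in> sets ?V}"
    then obtain a b where A: "A = a \<inter> b" and a: "a \<in> sets F" and b: "b \<in> sets ?V" by auto
    have aU: "a \<in> sets ?U" using a F by (auto simp: subalgebra_def)
    have "(\<integral>x\<in>A. Y x \<partial>M) = (\<integral>x\<in>a. Y x \<partial>M) * prob b"
      unfolding A using ind Y aU b by (rule set_integral_Int_indep)
    also have "(\<integral>x\<in>a. Y x \<partial>M) = (\<integral>x\<in>a. real_cond_exp M F Y x \<partial>M)"
      using Y(2) a by (rule F.real_cond_exp_intA)
    also have "\<dots> * prob b = (\<integral>x\<in>A. real_cond_exp M F Y x \<partial>M)"
      unfolding A using ind FY_U int_FY aU b by (rule set_integral_Int_indep[symmetric])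
    finally show "(\<integral>x\<in>A. Y x \<partial>M) = (\<integral>x\<in>A. real_cond_exp M F Y x \<partial>M)" .
  qed (use Y int_FY in auto)
qed

lemma (in prob_space) real_cond_exp_join_indep:
  fixes Y :: "'a \<Rightarrow> real"
  assumes ind: "indep_var SU U SV V"
    and F: "subalgebra (vimage_algebra (space M) U SU) F"
    and Y: "Y \<in> borel_measurable (vimage_algebra (space M) U SU)" "integrable M Y"
  shows "AE x in M. real_cond_exp M (join_algebra (space M) F (vimage_algebra (space M) V SV)) Y x
    = real_cond_exp M F Y x"
proof -
  let ?G = "join_algebra (space M) F (vimage_algebra (space M) V SV)"
  have MF: "subalgebra M F" and V: "subalgebra M (vimage_algebra (space M) V SV)"
    using F ind subalgebra_vimage_algebra[OF indep_var_rv1[OF ind]]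
      subalgebra_vimage_algebra[OF indep_var_rv2[OF ind]]
    by (auto simp: subalgebra_def)
  interpret F: finite_measure_subalgebra M F by unfold_locales (rule MF)
  interpret G: finite_measure_subalgebra M ?G
    by unfold_locales (rule subalgebra_join_algebra[OF MF V])
  have "subalgebra ?G F"
    using MF V by (intro subalgebra_join_algebra_left) (auto simp: subalgebra_def)
  then have "real_cond_exp M F Y \<in> borel_measurable ?G"
    by (rule measurable_from_subalg[OF _ borel_measurable_cond_exp])
  then show ?thesis
    using Y(2) F.real_cond_exp_int(1)[OF Y(2)] set_integral_real_cond_exp_join_indep[OF ind F Y]
    by (intro G.real_cond_exp_charact) auto
qed

lemma (in prob_space) integral_mult_real_cond_exp_join_indep:
  fixes Y g :: "'a \<Rightarrow> real"
  assumes ind: "indep_var SU U SV V"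
    and F: "subalgebra (vimage_algebra (space M) U SU) F"
    and Y: "Y \<in> borel_measurable (vimage_algebra (space M) U SU)" "integrable M Y"
    and g: "g \<in> borel_measurable (join_algebra (space M) F (vimage_algebra (space M) V SV))"
      "AE x in M. \<bar>g x\<bar> \<le> C"
  shows "(\<integral>x. Y x * g x \<partial>M) = (\<integral>x. real_cond_exp M F Y x * g x \<partial>M)"
proof -
  let ?G = "join_algebra (space M) F (vimage_algebra (space M) V SV)"
  have "subalgebra M (vimage_algebra (space M) U SU)" "subalgebra M (vimage_algebra (space M) V SV)"
    using ind by (auto intro: subalgebra_vimage_algebra indep_var_rv1 indep_var_rv2)
  with F have MG: "subalgebra M ?G"
    by (intro subalgebra_join_algebra) (auto simp: subalgebra_def)
  interpret G: finite_measure_subalgebra M ?G by unfold_locales (rule MG)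
  have [measurable]: "Y \<in> borel_measurable M" "g \<in> borel_measurable M"
    using Y(2) measurable_from_subalg[OF MG g(1)] by auto
  have "(\<integral>x. Y x * g x \<partial>M) = (\<integral>x. g x * real_cond_exp M ?G Y x \<partial>M)"
    using integrable_mult_bounded[OF Y(2) _ g(2)] g(1)
    by (subst G.real_cond_exp_intg(2)) (auto simp: mult.commute)
  also have "\<dots> = (\<integral>x. real_cond_exp M F Y x * g x \<partial>M)"
    using real_cond_exp_join_indep[OF ind F Y]
    by (intro integral_cong_AE) (auto simp: mult.commute)
  finally show ?thesis .
qed

lemma (in prob_space) real_cond_exp_binary_mult:
  fixes P Y :: "'a \<Rightarrow> real"
  assumes G: "subalgebra M G" and F: "subalgebra G F"
    and P: "P \<in> borel_measurable G" "\<And>x. x \<in> space M \<Longrightarrow> P x \<in> {0, 1}"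
    and Y: "integrable M Y"
    and ign: "AE x in M. P x = 1 \<longrightarrow> real_cond_exp M G Y x = real_cond_exp M F Y x"
  shows "AE x in M.
    real_cond_exp M F (\<lambda>x. P x * Y x) x = real_cond_exp M F Y x * real_cond_exp M F P x"
proof -
  have MF: "subalgebra M F" using G F by (auto simp: subalgebra_def)
  interpret F: finite_measure_subalgebra M F by unfold_locales (rule MF)
  interpret G: finite_measure_subalgebra M G by unfold_locales (rule G)
  have PM[measurable]: "P \<in> borel_measurable M" and YM[measurable]: "Y \<in> borel_measurable M"
    using measurable_from_subalg[OF G P(1)] Y by auto
  have bdd: "AE x in M. \<bar>P x\<bar> \<le> 1"
    using P(2) by (intro AE_I2) (metis abs_one abs_zero order_refl zero_le_one insertE singletonD)
  have PY: "integrable M (\<lambda>x. P x * Y x)"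
    using integrable_mult_bounded[OF Y _ bdd] by (simp add: mult.commute)
  have FY: "integrable M (\<lambda>x. real_cond_exp M F Y x * P x)"
    using integrable_mult_bounded[OF F.real_cond_exp_int(1)[OF Y] _ bdd] by simp
  have "AE x in M. real_cond_exp M G (\<lambda>x. P x * Y x) x = real_cond_exp M F Y x * P x"
    using G.real_cond_exp_mult[OF P(1) YM PY] ign AE_space
    by eventually_elim (use P(2) in auto)
  then have "AE x in M. real_cond_exp M F (real_cond_exp M G (\<lambda>x. P x * Y x)) x
      = real_cond_exp M F (\<lambda>x. real_cond_exp M F Y x * P x) x"
    by (rule F.real_cond_exp_cong) auto
  then show ?thesis
    using F.real_cond_exp_nested_subalg[OF G F PY]
      F.real_cond_exp_mult[OF borel_measurable_cond_exp PM FY]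
    by eventually_elim auto
qed

lemma norm_ipw_diff_le:
  fixes y :: "'v::real_normed_vector"
  assumes "0 < c" "c \<le> a" "c \<le> b" "0 \<le> q" "\<bar>a - b\<bar> \<le> d"
  shows "norm ((q / a) *\<^sub>R y - (q / b) *\<^sub>R y) \<le> q * norm y * d / c\<^sup>2"
proof -
  have ab: "0 < a" "0 < b" "c\<^sup>2 \<le> a * b"
    using assms by (auto simp: power2_eq_square intro: mult_mono)
  have "q / a - q / b = q * (b - a) / (a * b)"
    using ab by (simp add: field_simps)
  then have "norm ((q / a) *\<^sub>R y - (q / b) *\<^sub>R y) = q * norm y * \<bar>a - b\<bar> / (a * b)"
    using ab assms(4) by (simp add: scaleR_diff_left[symmetric] abs_mult abs_minus_commute)
  also have "\<dots> \<le> q * norm y * d / (a * b)"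
    using ab assms by (intro divide_right_mono mult_left_mono) auto
  also have "\<dots> \<le> q * norm y * d / c\<^sup>2"
    using ab assms by (intro divide_left_mono mult_nonneg_nonneg) auto
  finally show ?thesis .
qed

lemma abs_mult_le_amgm:
  fixes s d t :: real
  assumes "0 < t" "0 \<le> d" "d \<le> 1"
  shows "\<bar>s\<bar> * d \<le> t * s\<^sup>2 + d / t"
proof -
  have "0 \<le> (2 * t * \<bar>s\<bar> - 1)\<^sup>2" by simp
  also have "\<dots> = 4 * t\<^sup>2 * s\<^sup>2 - 4 * t * \<bar>s\<bar> + 1"
    by (simp add: power2_diff power_mult_distrib)
  finally have "\<bar>s\<bar> \<le> t * s\<^sup>2 + 1 / (4 * t)"
    using assms(1) by (simp add: field_simps power2_eq_square)
  then have "\<bar>s\<bar> * d \<le> t * s\<^sup>2 * d + 1 / (4 * t) * d"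
    using assms by (metis distrib_right mult_right_mono)
  also have "\<dots> \<le> t * s\<^sup>2 + d / t"
  proof (rule add_mono)
    show "t * s\<^sup>2 * d \<le> t * s\<^sup>2"
      using assms by (intro mult_left_le) auto
    show "1 / (4 * t) * d \<le> d / t"
      using assms by (simp add: field_simps)
  qed
  finally show ?thesis .
qed

lemma (in finite_measure) tendsto_integral_mult_vanishing:
  fixes S :: "'a \<Rightarrow> real" and D :: "nat \<Rightarrow> 'a \<Rightarrow> real"
  assumes S: "S \<in> borel_measurable M" "integrable M (\<lambda>x. (S x)\<^sup>2)"
    and D: "\<And>n. D n \<in> borel_measurable M" "\<And>n. AE x in M. 0 \<le> D n x \<and> D n x \<le> 1"
    and lim: "(\<lambda>n. \<integral>x. D n x \<partial>M) \<longlonglongrightarrow> 0"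
  shows "(\<lambda>n. \<integral>x. S x * D n x \<partial>M) \<longlonglongrightarrow> 0"
proof -
  define C where "C = (\<integral>x. (S x)\<^sup>2 \<partial>M)"
  have C: "0 \<le> C" unfolding C_def by simp
  have D_abs: "AE x in M. \<bar>D n x\<bar> \<le> 1" for n
    using D(2)[of n] by eventually_elim auto
  have int_D: "integrable M (D n)" for n
    using D(1) D_abs by (intro integrable_const_bound[where B = 1]) auto
  have int_SD: "integrable M (\<lambda>x. S x * D n x)" for n
    using integrable_mult_bounded[OF square_integrable_imp_integrable[OF S] D(1) D_abs] .
  have bound: "\<bar>\<integral>x. S x * D n x \<partial>M\<bar> \<le> t * C + (\<integral>x. D n x \<partial>M) / t" if "0 < t" for n t
  proof -
    have "\<bar>\<integral>x. S x * D n x \<partial>M\<bar> \<le> (\<integral>x. \<bar>S x * D n x\<bar> \<partial>M)"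
      by (rule integral_abs_bound)
    also have "\<dots> \<le> (\<integral>x. t * (S x)\<^sup>2 + D n x / t \<partial>M)"
    proof (rule integral_mono_AE)
      show "AE x in M. \<bar>S x * D n x\<bar> \<le> t * (S x)\<^sup>2 + D n x / t"
        using D(2)[of n] by eventually_elim (simp add: abs_mult abs_mult_le_amgm[OF that])
    qed (use int_SD int_D S(2) in auto)
    also have "\<dots> = t * C + (\<integral>x. D n x \<partial>M) / t"
      unfolding C_def using S(2) int_D by simp
    finally show ?thesis .
  qed
  show ?thesis
  proof (rule LIMSEQ_I)
    fix r :: real assume "0 < r"
    define t where "t = r / (2 * (C + 1))"
    have t: "0 < t" "t * C < r / 2"
      using \<open>0 < r\<close> C by (auto simp: t_def field_simps)
    obtain n0 where n0: "\<And>n. n \<ge> n0 \<Longrightarrow> (\<integral>x. D n x \<partial>M) < r * t / 2"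
      using order_tendstoD(2)[OF lim, of "r * t / 2"] \<open>0 < r\<close> t(1)
      by (auto simp: eventually_sequentially)
    have "norm ((\<integral>x. S x * D n x \<partial>M) - 0) < r" if "n \<ge> n0" for n
    proof -
      have "(\<integral>x. D n x \<partial>M) / t < r / 2"
        using n0[OF that] t(1) by (simp add: field_simps)
      then show ?thesis
        using bound[OF t(1), of n] t(2) by (simp only: diff_zero real_norm_def)
    qed
    then show "\<exists>n0. \<forall>n\<ge>n0. norm ((\<integral>x. S x * D n x \<partial>M) - 0) < r" by blast
  qed
qed

lemma max_abs_diff_bounds:
  fixes f g :: "'i \<Rightarrow> real"
  assumes "finite I" "\<And>i. i \<in> I \<Longrightarrow> 0 \<le> f i \<and> f i \<le> 1 \<and> 0 \<le> g i \<and> g i \<le> 1"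
  shows "0 \<le> Max (insert 0 ((\<lambda>i. \<bar>f i - g i\<bar>) ` I))"
    and "Max (insert 0 ((\<lambda>i. \<bar>f i - g i\<bar>) ` I)) \<le> 1"
    and "\<And>i. i \<in> I \<Longrightarrow> \<bar>f i - g i\<bar> \<le> Max (insert 0 ((\<lambda>i. \<bar>f i - g i\<bar>) ` I))"
proof -
  show "0 \<le> Max (insert 0 ((\<lambda>i. \<bar>f i - g i\<bar>) ` I))"
    "\<And>i. i \<in> I \<Longrightarrow> \<bar>f i - g i\<bar> \<le> Max (insert 0 ((\<lambda>i. \<bar>f i - g i\<bar>) ` I))"
    using assms(1) by (auto intro: Max_ge)
  show "Max (insert 0 ((\<lambda>i. \<bar>f i - g i\<bar>) ` I)) \<le> 1"
    using assms by (auto simp: abs_le_iff dest!: assms(2))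
qed

lemma cal_est_eq_sum:
  "cal_est N A q p \<Delta> w = (\<Sum>i\<in>{1..N}. if A i w = 1 then (q i w / p i w) *\<^sub>R \<Delta> i w else 0)"
  unfolding cal_est_def by (rule sum.inter_filter) simp

locale client_round = prob_space M for M :: "'a measure" +
  fixes SZ :: "'z measure" and SX :: "'x measure" and N :: nat
    and Z :: "nat \<Rightarrow> 'a \<Rightarrow> 'z" and X :: "nat \<Rightarrow> 'a \<Rightarrow> 'x"
    and E :: "nat \<Rightarrow> 'a \<Rightarrow> real" and A :: "nat \<Rightarrow> 'a \<Rightarrow> real"
    and \<Delta> :: "nat \<Rightarrow> 'a \<Rightarrow> real^'m"
  assumes indep_clients: "indep_vars (\<lambda>_. SZ \<Otimes>\<^sub>M borel \<Otimes>\<^sub>M SX \<Otimes>\<^sub>M borel \<Otimes>\<^sub>M borel)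
      (\<lambda>i w. (Z i w, E i w, X i w, A i w, \<Delta> i w)) {1..N}"
    and enrolled_01: "\<And>i w. i \<in> {1..N} \<Longrightarrow> w \<in> space M \<Longrightarrow> E i w \<in> {0, 1}"
    and participating_01: "\<And>i w. i \<in> {1..N} \<Longrightarrow> w \<in> space M \<Longrightarrow> A i w \<in> {0, 1}"
    and not_enrolled_not_participating:
      "\<And>i w. i \<in> {1..N} \<Longrightarrow> w \<in> space M \<Longrightarrow> E i w = 0 \<Longrightarrow> A i w = 0"
    and integrable_update: "\<And>i. i \<in> {1..N} \<Longrightarrow> integrable M (\<Delta> i)"
begin

abbreviation client_space :: "('z \<times> real \<times> 'x \<times> real \<times> (real^'m)) measure" where
  "client_space \<equiv> SZ \<Otimes>\<^sub>M borel \<Otimes>\<^sub>M SX \<Otimes>\<^sub>M borel \<Otimes>\<^sub>M borel"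

definition client :: "nat \<Rightarrow> 'a \<Rightarrow> 'z \<times> real \<times> 'x \<times> real \<times> (real^'m)" where
  "client i w = (Z i w, E i w, X i w, A i w, \<Delta> i w)"

abbreviation clients_algebra :: "nat set \<Rightarrow> 'a measure" where
  "clients_algebra J \<equiv> vimage_algebra (space M) (\<lambda>w. \<lambda>j\<in>J. client j w) (PiM J (\<lambda>_. client_space))"

abbreviation join_others :: "'a measure \<Rightarrow> nat \<Rightarrow> 'a measure" where
  "join_others F i \<equiv> join_algebra (space M) F (clients_algebra ({1..N} - {i}))"

abbreviation sigma_Z :: "nat \<Rightarrow> 'a measure" where
  "sigma_Z i \<equiv> gen_sigma M (Z i) SZ"

abbreviation sigma_ZE :: "nat \<Rightarrow> 'a measure" where
  "sigma_ZE i \<equiv> gen_sigma M (\<lambda>v. (Z i v, E i v)) (SZ \<Otimes>\<^sub>M borel)"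

abbreviation sigma_ZXE :: "nat \<Rightarrow> 'a measure" where
  "sigma_ZXE i \<equiv> gen_sigma M (\<lambda>v. (Z i v, X i v, E i v)) (SZ \<Otimes>\<^sub>M SX \<Otimes>\<^sub>M borel)"

abbreviation sigma_ZXEA :: "nat \<Rightarrow> 'a measure" where
  "sigma_ZXEA i \<equiv> gen_sigma M (\<lambda>v. (Z i v, X i v, E i v, A i v)) (SZ \<Otimes>\<^sub>M SX \<Otimes>\<^sub>M borel \<Otimes>\<^sub>M borel)"

abbreviation propensity :: "nat \<Rightarrow> 'a \<Rightarrow> real" where
  "propensity \<equiv> pi_part M SZ SX Z X E A"

lemma measurable_client: "i \<in> {1..N} \<Longrightarrow> client i \<in> M \<rightarrow>\<^sub>M client_space"
  using indep_clients unfolding indep_vars_def client_def[abs_def] by auto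

lemma measurable_client_components:
  assumes "i \<in> {1..N}"
  shows "Z i \<in> M \<rightarrow>\<^sub>M SZ" "E i \<in> borel_measurable M" "X i \<in> M \<rightarrow>\<^sub>M SX"
    "A i \<in> borel_measurable M" "\<Delta> i \<in> borel_measurable M"
proof -
  note [measurable] = measurable_client[OF assms]
  have "(\<lambda>w. fst (client i w)) \<in> M \<rightarrow>\<^sub>M SZ" "(\<lambda>w. fst (snd (client i w))) \<in> borel_measurable M"
    "(\<lambda>w. fst (snd (snd (client i w)))) \<in> M \<rightarrow>\<^sub>M SX"
    "(\<lambda>w. fst (snd (snd (snd (client i w))))) \<in> borel_measurable M"
    "(\<lambda>w. snd (snd (snd (snd (client i w))))) \<in> borel_measurable M"
    by measurable
  then show "Z i \<in> M \<rightarrow>\<^sub>M SZ" "E i \<in> borel_measurable M" "X i \<in> M \<rightarrow>\<^sub>M SX"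
    "A i \<in> borel_measurable M" "\<Delta> i \<in> borel_measurable M"
    by (simp_all add: client_def)
qed

lemma participating_imp_enrolled:
  "i \<in> {1..N} \<Longrightarrow> w \<in> space M \<Longrightarrow> A i w = 1 \<Longrightarrow> E i w = 1"
  using enrolled_01 not_enrolled_not_participating by fastforce

lemma indep_client_others:
  assumes "i \<in> {1..N}"
  shows "indep_var (PiM {i} (\<lambda>_. client_space)) (\<lambda>w. \<lambda>j\<in>{i}. client j w)
    (PiM ({1..N} - {i}) (\<lambda>_. client_space)) (\<lambda>w. \<lambda>j\<in>{1..N} - {i}. client j w)"
proof -
  have "indep_vars (\<lambda>_. client_space) client {1..N}"
    using indep_clients by (simp add: client_def[abs_def])
  then show ?thesis
    using assms by (intro indep_var_restrict) auto
qed

lemma measurable_clients_algebra: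
  assumes "j \<in> J" "J \<subseteq> {1..N}" "h \<in> client_space \<rightarrow>\<^sub>M T"
  shows "(\<lambda>w. h (client j w)) \<in> clients_algebra J \<rightarrow>\<^sub>M T"
  using assms measurable_client by (intro measurable_vimage_algebra_restrict) auto

lemma subalgebra_clients_algebra: "J \<subseteq> {1..N} \<Longrightarrow> subalgebra M (clients_algebra J)"
  using measurable_client by (intro subalgebra_vimage_algebra measurable_restrict) auto

lemma measurable_integrable_update_component:
  assumes "i \<in> {1..N}"
  shows "(\<lambda>w. \<Delta> i w $ k) \<in> borel_measurable (clients_algebra {i})" "integrable M (\<lambda>w. \<Delta> i w $ k)"
proof -
  have "(\<lambda>w. (\<lambda>(z, e, x, a, d). d $ k) (client i w)) \<in> borel_measurable (clients_algebra {i})"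
    using assms by (intro measurable_clients_algebra) auto
  then show "(\<lambda>w. \<Delta> i w $ k) \<in> borel_measurable (clients_algebra {i})"
    by (simp add: client_def)
  show "integrable M (\<lambda>w. \<Delta> i w $ k)"
    by (rule integrable_bounded_linear[OF bounded_linear_vec_nth integrable_update[OF assms]])
qed

lemma client_subalgebras:
  assumes "i \<in> {1..N}"
  shows "subalgebra (clients_algebra {i}) (sigma_ZXE i)"
    "subalgebra (clients_algebra {i}) (sigma_ZE i)"
    "subalgebra (sigma_ZXEA i) (sigma_ZXE i)" "subalgebra (sigma_ZXE i) (sigma_ZE i)"
    "subalgebra M (sigma_ZXEA i)" "subalgebra M (sigma_ZXE i)" "subalgebra M (sigma_ZE i)"
    "subalgebra M (sigma_Z i)"
proof -
  note [measurable] = measurable_client_components[OF assms]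
  have "(\<lambda>v. (Z i v, X i v, E i v)) = (\<lambda>v. (\<lambda>(z, e, x, a, d). (z, x, e)) (client i v))"
    "(\<lambda>v. (Z i v, E i v)) = (\<lambda>v. (\<lambda>(z, e, x, a, d). (z, e)) (client i v))"
    by (simp_all add: client_def)
  then show "subalgebra (clients_algebra {i}) (sigma_ZXE i)"
    "subalgebra (clients_algebra {i}) (sigma_ZE i)"
    unfolding gen_sigma_def using assms measurable_client
    by (auto intro!: subalgebra_vimage_algebra_restrict)
  show "subalgebra (sigma_ZXEA i) (sigma_ZXE i)"
    unfolding gen_sigma_def
    by (rule subalgebra_vimage_algebra_factor[where h = "\<lambda>(z, x, e, a). (z, x, e)"]) auto
  show "subalgebra (sigma_ZXE i) (sigma_ZE i)"
    unfolding gen_sigma_def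
    by (rule subalgebra_vimage_algebra_factor[where h = "\<lambda>(z, x, e). (z, e)"]) auto
  show "subalgebra M (sigma_ZXEA i)" "subalgebra M (sigma_ZXE i)" "subalgebra M (sigma_ZE i)"
    "subalgebra M (sigma_Z i)"
    unfolding gen_sigma_def by (auto intro: subalgebra_vimage_algebra)
qed

lemma propensity_le_1: "i \<in> {1..N} \<Longrightarrow> AE w in M. propensity i w \<le> 1"
proof -
  assume i: "i \<in> {1..N}"
  note [measurable] = measurable_client_components[OF i]
  interpret F: finite_measure_subalgebra M "sigma_ZXE i"
    by unfold_locales (rule client_subalgebras(6)[OF i])
  show ?thesis
    unfolding pi_part_def
    by (rule F.real_cond_exp_le_c) (auto intro!: integrable_const_bound[where B = 1])
qed

lemma measurable_join_others:
  assumes i: "i \<in> {1..N}" and W: "W \<in> borel_measurable (join_others (sigma_ZE i) i)"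
  shows "W \<in> borel_measurable (join_others (sigma_ZXE i) i)" "W \<in> borel_measurable M"
proof -
  have "subalgebra (join_others (sigma_ZXE i) i) (join_others (sigma_ZE i) i)"
    using subalgebra_join_algebra_mono[OF client_subalgebras(4)[OF i],
        of "clients_algebra ({1..N} - {i})"]
    by (simp add: gen_sigma_def)
  then show W_ZXE: "W \<in> borel_measurable (join_others (sigma_ZXE i) i)"
    using W by (rule measurable_from_subalg)
  have "subalgebra M (join_others (sigma_ZXE i) i)"
    using client_subalgebras(6)[OF i] subalgebra_clients_algebra[of "{1..N} - {i}"]
    by (intro subalgebra_join_algebra) auto
  then show "W \<in> borel_measurable M"
    using W_ZXE by (rule measurable_from_subalg)
qed

(* Off the enrolled event, overlap gives no lower bound on the propensity, so W has to
   vanish there. *)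
lemma measurable_bounded_ipw_weight:
  assumes i: "i \<in> {1..N}" and c: "0 < c"
    and W: "W \<in> borel_measurable (join_others (sigma_ZE i) i)"
      "AE w in M. \<bar>W w\<bar> \<le> 1" "\<And>w. w \<in> space M \<Longrightarrow> E i w \<noteq> 1 \<Longrightarrow> W w = 0"
    and overlap: "AE w in M. E i w = 1 \<longrightarrow> c \<le> propensity i w"
  shows "(\<lambda>w. W w / propensity i w) \<in> borel_measurable (join_others (sigma_ZXE i) i)"
    and "AE w in M. \<bar>W w / propensity i w\<bar> \<le> 1 / c"
proof -
  have "propensity i \<in> borel_measurable (join_others (sigma_ZXE i) i)"
    unfolding pi_part_def
    by (intro measurable_from_subalg[OF subalgebra_join_algebra_left borel_measurable_cond_exp])
      (simp_all add: gen_sigma_def)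
  with measurable_join_others(1)[OF i W(1)]
  show "(\<lambda>w. W w / propensity i w) \<in> borel_measurable (join_others (sigma_ZXE i) i)"
    by (rule borel_measurable_divide)
  show "AE w in M. \<bar>W w / propensity i w\<bar> \<le> 1 / c"
    using W(2) overlap AE_space
  proof eventually_elim
    case (elim w)
    show ?case
    proof (cases "E i w = 1")
      case True
      then have "\<bar>W w\<bar> / propensity i w \<le> 1 / c"
        using elim c by (intro frac_le) auto
      then show ?thesis using elim True c by simp
    qed (use W(3) elim c in simp)
  qed
qed

lemma real_cond_exp_participation:
  assumes i: "i \<in> {1..N}"
    and part_ign: "AE w in M. E i w = 1 \<and> A i w = 1 \<longrightarrow>
      vec_cond_exp M (sigma_ZXEA i) (\<Delta> i) w = vec_cond_exp M (sigma_ZXE i) (\<Delta> i) w"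
  shows "AE w in M. real_cond_exp M (sigma_ZXE i) (\<lambda>w. (if A i w = 1 then 1 else 0) * \<Delta> i w $ k) w
    = real_cond_exp M (sigma_ZXE i) (\<lambda>w. \<Delta> i w $ k) w * propensity i w"
proof -
  note sub = client_subalgebras[OF i]
  note [measurable] = measurable_client_components[OF i]
  have "(\<lambda>w. if A i w = 1 then 1 else 0 :: real) \<in> borel_measurable (sigma_ZXEA i)"
    unfolding gen_sigma_def
    by (rule measurable_vimage_algebra_factor[where h = "\<lambda>(z, x, e, a). if a = 1 then 1 else 0"])
      auto
  moreover have "AE w in M. (if A i w = 1 then 1 else 0 :: real) = 1 \<longrightarrow>
      real_cond_exp M (sigma_ZXEA i) (\<lambda>w. \<Delta> i w $ k) w
      = real_cond_exp M (sigma_ZXE i) (\<lambda>w. \<Delta> i w $ k) w"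
    using part_ign AE_space
    by eventually_elim (auto simp: participating_imp_enrolled[OF i] simp flip: vec_cond_exp_nth)
  ultimately show ?thesis
    unfolding pi_part_def using sub(5,3) measurable_integrable_update_component(2)[OF i]
    by (intro real_cond_exp_binary_mult) auto
qed

lemma integral_ipw_participation:
  assumes i: "i \<in> {1..N}" and c: "0 < c"
    and W: "W \<in> borel_measurable (join_others (sigma_ZE i) i)"
      "AE w in M. \<bar>W w\<bar> \<le> 1" "\<And>w. w \<in> space M \<Longrightarrow> E i w \<noteq> 1 \<Longrightarrow> W w = 0"
    and part_ign: "AE w in M. E i w = 1 \<and> A i w = 1 \<longrightarrow>
      vec_cond_exp M (sigma_ZXEA i) (\<Delta> i) w = vec_cond_exp M (sigma_ZXE i) (\<Delta> i) w"
    and overlap: "AE w in M. E i w = 1 \<longrightarrow> c \<le> propensity i w"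
  shows "(\<integral>w. A i w * \<Delta> i w $ k * (W w / propensity i w) \<partial>M) = (\<integral>w. \<Delta> i w $ k * W w \<partial>M)"
proof -
  let ?F = "sigma_ZXE i"
  define Y where "Y = (\<lambda>w. \<Delta> i w $ k)"
  define P where "P = (\<lambda>w. if A i w = 1 then 1 else 0 :: real)"
  note ind = indep_client_others[OF i] and F = client_subalgebras(1)[OF i]
  note g = measurable_bounded_ipw_weight[OF i c W overlap]
  note [measurable] = measurable_client_components[OF i] measurable_join_others(2)[OF i W(1)]
  have Y: "Y \<in> borel_measurable (clients_algebra {i})" "integrable M Y"
    unfolding Y_def by (rule measurable_integrable_update_component[OF i])+
  have "(\<lambda>w. (\<lambda>(z, e, x, a, d). (if a = 1 then 1 else 0) * d $ k) (client i w))
       \<in> borel_measurable (clients_algebra {i})"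
    using i by (intro measurable_clients_algebra) auto
  then have PY: "(\<lambda>w. P w * Y w) \<in> borel_measurable (clients_algebra {i})"
    "integrable M (\<lambda>w. P w * Y w)"
    using integrable_mult_bounded[OF Y(2), of P 1]
    by (simp_all add: Y_def P_def client_def mult.commute)
  have "(\<integral>w. A i w * \<Delta> i w $ k * (W w / propensity i w) \<partial>M)
      = (\<integral>w. P w * Y w * (W w / propensity i w) \<partial>M)"
    using participating_01[OF i]
    by (intro Bochner_Integration.integral_cong) (auto simp: P_def Y_def)
  also have "\<dots> = (\<integral>w. real_cond_exp M ?F (\<lambda>w. P w * Y w) w * (W w / propensity i w) \<partial>M)"
    by (rule integral_mult_real_cond_exp_join_indep[OF ind F PY g])
  also have "\<dots> = (\<integral>w. real_cond_exp M ?F Y w * W w \<partial>M)"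
  proof (rule integral_cong_AE)
    show "AE w in M. real_cond_exp M ?F (\<lambda>w. P w * Y w) w * (W w / propensity i w)
        = real_cond_exp M ?F Y w * W w"
      using real_cond_exp_participation[OF i part_ign, of k] overlap AE_space
      by eventually_elim (use W(3) c in \<open>auto simp: P_def Y_def\<close>)
  qed (simp_all add: pi_part_def)
  also have "\<dots> = (\<integral>w. Y w * W w \<partial>M)"
    using measurable_join_others(1)[OF i W(1)]
    by (rule integral_mult_real_cond_exp_join_indep[OF ind F Y _ W(2), symmetric])
  finally show ?thesis by (simp add: Y_def)
qed

lemma integral_enrolled_outcome_model:
  assumes i: "i \<in> {1..N}"
    and W: "W \<in> borel_measurable (join_others (sigma_ZE i) i)"
      "AE w in M. \<bar>W w\<bar> \<le> 1" "\<And>w. w \<in> space M \<Longrightarrow> E i w \<noteq> 1 \<Longrightarrow> W w = 0"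
    and enr_ign: "AE w in M. E i w = 1 \<longrightarrow>
      vec_cond_exp M (sigma_ZE i) (\<Delta> i) w = vec_cond_exp M (sigma_Z i) (\<Delta> i) w"
    and outcome: "AE w in M. vec_cond_exp M (sigma_Z i) (\<Delta> i) w = B *v b (Z i w)"
    and b: "b \<in> borel_measurable SZ"
  shows "(\<integral>w. \<Delta> i w $ k * W w \<partial>M) = (\<integral>w. (B *v b (Z i w)) $ k * W w \<partial>M)"
proof -
  note [measurable] = measurable_client_components[OF i] b measurable_join_others(2)[OF i W(1)]
  have "(\<integral>w. \<Delta> i w $ k * W w \<partial>M)
      = (\<integral>w. real_cond_exp M (sigma_ZE i) (\<lambda>w. \<Delta> i w $ k) w * W w \<partial>M)"
    using indep_client_others[OF i] client_subalgebras(2)[OF i]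
      measurable_integrable_update_component[OF i] W(1,2)
    by (rule integral_mult_real_cond_exp_join_indep)
  also have "\<dots> = (\<integral>w. (B *v b (Z i w)) $ k * W w \<partial>M)"
  proof (rule integral_cong_AE)
    show "AE w in M. real_cond_exp M (sigma_ZE i) (\<lambda>w. \<Delta> i w $ k) w * W w
        = (B *v b (Z i w)) $ k * W w"
      using enr_ign outcome AE_space
      by eventually_elim (use W(3) in \<open>auto simp flip: vec_cond_exp_nth\<close>)
  qed simp_all
  finally show ?thesis .
qed

lemma integrable_ipw_term:
  assumes i: "i \<in> {1..N}" and c: "0 < c"
    and [measurable]: "p \<in> borel_measurable M" "W \<in> borel_measurable M"
    and bdd: "AE w in M. E i w = 1 \<longrightarrow> c \<le> p w \<and> \<bar>W w\<bar> \<le> 1"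
  shows "integrable M (\<lambda>w. if A i w = 1 then (W w / p w) *\<^sub>R \<Delta> i w else 0)"
proof (rule Bochner_Integration.integrable_bound[of _ "\<lambda>w. (1 / c) *\<^sub>R \<Delta> i w"])
  note [measurable] = measurable_client_components[OF i]
  show "integrable M (\<lambda>w. (1 / c) *\<^sub>R \<Delta> i w)"
    using integrable_update[OF i] by simp
  show "(\<lambda>w. if A i w = 1 then (W w / p w) *\<^sub>R \<Delta> i w else 0) \<in> borel_measurable M"
    by measurable
  show "AE w in M. norm (if A i w = 1 then (W w / p w) *\<^sub>R \<Delta> i w else 0) \<le> norm ((1 / c) *\<^sub>R \<Delta> i w)"
    using bdd AE_space
  proof eventually_elim
    case (elim w)
    show ?case
    proof (cases "A i w = 1")
      case True
      then have "c \<le> p w" "\<bar>W w\<bar> \<le> 1"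
        using elim participating_imp_enrolled[OF i] by auto
      then have "\<bar>W w / p w\<bar> \<le> 1 / c"
        using c by (auto simp: abs_div intro!: frac_le)
      then have "\<bar>W w / p w\<bar> * norm (\<Delta> i w) \<le> 1 / c * norm (\<Delta> i w)"
        by (rule mult_right_mono) simp
      then show ?thesis
        using True c by simp
    qed simp
  qed
qed

lemma integral_ipw_term_eq_outcome_model:
  assumes i: "i \<in> {1..N}" and c: "0 < c"
    and W: "W \<in> borel_measurable (join_others (sigma_ZE i) i)"
      "AE w in M. \<bar>W w\<bar> \<le> 1" "\<And>w. w \<in> space M \<Longrightarrow> E i w \<noteq> 1 \<Longrightarrow> W w = 0"
    and part_ign: "AE w in M. E i w = 1 \<and> A i w = 1 \<longrightarrow>
      vec_cond_exp M (sigma_ZXEA i) (\<Delta> i) w = vec_cond_exp M (sigma_ZXE i) (\<Delta> i) w"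
    and overlap: "AE w in M. E i w = 1 \<longrightarrow> c \<le> propensity i w"
    and enr_ign: "AE w in M. E i w = 1 \<longrightarrow>
      vec_cond_exp M (sigma_ZE i) (\<Delta> i) w = vec_cond_exp M (sigma_Z i) (\<Delta> i) w"
    and outcome: "AE w in M. vec_cond_exp M (sigma_Z i) (\<Delta> i) w = B *v b (Z i w)"
    and b: "b \<in> borel_measurable SZ" "integrable M (\<lambda>w. b (Z i w))"
  shows "(\<integral>w. (if A i w = 1 then (W w / propensity i w) *\<^sub>R \<Delta> i w else 0) \<partial>M)
    = (\<integral>w. W w *\<^sub>R (B *v b (Z i w)) \<partial>M)"
proof -
  note [measurable] = measurable_client_components[OF i] b(1)
  note [measurable] = measurable_join_others(2)[OF i W(1)]
  have [measurable]: "propensity i \<in> borel_measurable M"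
    by (simp add: pi_part_def)
  have ipw_int: "integrable M (\<lambda>w. if A i w = 1 then (W w / propensity i w) *\<^sub>R \<Delta> i w else 0)"
    using W(2) overlap by (intro integrable_ipw_term[OF i c]) (auto elim: eventually_mono)
  have model_int: "integrable M (\<lambda>w. W w *\<^sub>R (B *v b (Z i w)))"
    using integrable_bounded_linear[OF matrix_vector_mul_bounded_linear b(2)] _ W(2)
    by (rule integrable_scaleR_bounded) simp
  show ?thesis
  proof (subst vec_eq_iff, intro allI)
    fix k
    have "(\<integral>w. (if A i w = 1 then (W w / propensity i w) *\<^sub>R \<Delta> i w else 0) \<partial>M) $ k
        = (\<integral>w. A i w * \<Delta> i w $ k * (W w / propensity i w) \<partial>M)"
      using participating_01[OF i]
      by (subst integral_vec_nth[OF ipw_int]) (force intro!: Bochner_Integration.integral_cong)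
    also have "\<dots> = (\<integral>w. \<Delta> i w $ k * W w \<partial>M)"
      by (rule integral_ipw_participation[OF i c W part_ign overlap])
    also have "\<dots> = (\<integral>w. (B *v b (Z i w)) $ k * W w \<partial>M)"
      by (rule integral_enrolled_outcome_model[OF i W enr_ign outcome b(1)])
    also have "\<dots> = (\<integral>w. W w *\<^sub>R (B *v b (Z i w)) \<partial>M) $ k"
      by (simp add: integral_vec_nth[OF model_int] mult.commute)
    finally show "(\<integral>w. (if A i w = 1 then (W w / propensity i w) *\<^sub>R \<Delta> i w else 0) \<partial>M) $ k
        = (\<integral>w. W w *\<^sub>R (B *v b (Z i w)) \<partial>M) $ k" .
  qed
qed

lemma borel_measurable_max_deviation:
  assumes "\<And>i. i \<in> {1..N} \<Longrightarrow> p i \<in> borel_measurable M"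
  shows "(\<lambda>w. Max (insert 0 ((\<lambda>i. \<bar>p i w - propensity i w\<bar>) ` {i\<in>{1..N}. E i w = 1})))
    \<in> borel_measurable M"
proof -
  have "insert 0 ((\<lambda>i. \<bar>p i w - propensity i w\<bar>) ` {i\<in>{1..N}. E i w = 1})
      = insert 0 ((\<lambda>i. if E i w = 1 then \<bar>p i w - propensity i w\<bar> else 0) ` {1..N})" for w
    by auto
  moreover have "(\<lambda>w. Max (insert 0
      ((\<lambda>i. if E i w = 1 then \<bar>p i w - propensity i w\<bar> else 0) ` {1..N}))) \<in> borel_measurable M"
  proof (rule borel_measurable_Max_insert)
    fix i assume i: "i \<in> {1..N}"
    note [measurable] = assms[OF i] measurable_client_components[OF i]
    show "(\<lambda>w. if E i w = 1 then \<bar>p i w - propensity i w\<bar> else 0) \<in> borel_measurable M"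
      unfolding pi_part_def by measurable
  qed simp
  ultimately show ?thesis by simp
qed

lemma max_deviation_bounds:
  assumes p: "\<And>i. i \<in> {1..N} \<Longrightarrow> AE w in M. E i w = 1 \<longrightarrow> c \<le> p i w \<and> p i w \<le> 1"
    and overlap: "\<And>i. i \<in> {1..N} \<Longrightarrow> AE w in M. E i w = 1 \<longrightarrow> c \<le> propensity i w"
    and c: "0 < c"
  defines "D w \<equiv> Max (insert 0 ((\<lambda>i. \<bar>p i w - propensity i w\<bar>) ` {i\<in>{1..N}. E i w = 1}))"
  shows "AE w in M. 0 \<le> D w \<and> D w \<le> 1 \<and> (\<forall>i\<in>{1..N}. E i w = 1 \<longrightarrow>
    c \<le> p i w \<and> c \<le> propensity i w \<and> \<bar>p i w - propensity i w\<bar> \<le> D w)"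
proof -
  have "AE w in M. \<forall>i\<in>{1..N}. E i w = 1 \<longrightarrow>
      c \<le> p i w \<and> p i w \<le> 1 \<and> c \<le> propensity i w \<and> propensity i w \<le> 1"
  proof (rule AE_finite_allI)
    fix i assume "i \<in> {1..N}"
    show "AE w in M. E i w = 1 \<longrightarrow> c \<le> p i w \<and> p i w \<le> 1 \<and> c \<le> propensity i w \<and> propensity i w \<le> 1"
      using p[OF \<open>i \<in> {1..N}\<close>] overlap[OF \<open>i \<in> {1..N}\<close>] propensity_le_1[OF \<open>i \<in> {1..N}\<close>]
      by eventually_elim auto
  qed simp
  then show ?thesis
  proof eventually_elim
    case (elim w)
    let ?I = "{i\<in>{1..N}. E i w = 1}"
    have "0 \<le> p i w \<and> p i w \<le> 1 \<and> 0 \<le> propensity i w \<and> propensity i w \<le> 1" if "i \<in> ?I" for i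
      using elim that c by force
    from max_abs_diff_bounds[of ?I "\<lambda>i. p i w" "\<lambda>i. propensity i w", OF _ this] show ?case
      using elim unfolding D_def by auto
  qed
qed
end

section \<open>Calibrated weights\<close>

locale calibrated_round = client_round M SZ SX N Z X E A \<Delta>
  for M :: "'a measure" and SZ :: "'z measure" and SX :: "'x measure" and N :: nat
    and Z :: "nat \<Rightarrow> 'a \<Rightarrow> 'z" and X :: "nat \<Rightarrow> 'a \<Rightarrow> 'x"
    and E :: "nat \<Rightarrow> 'a \<Rightarrow> real" and A :: "nat \<Rightarrow> 'a \<Rightarrow> real"
    and \<Delta> :: "nat \<Rightarrow> 'a \<Rightarrow> real^'m" +
  fixes b :: "'z \<Rightarrow> real^'q" and \<mu>b :: "real^'q" and q :: "nat \<Rightarrow> 'a \<Rightarrow> real"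
  assumes measurable_b: "b \<in> borel_measurable SZ"
    and mean_b: "\<And>i. i \<in> {1..N} \<Longrightarrow> has_bochner_integral M (\<lambda>w. b (Z i w)) \<mu>b"
    and measurable_weights: "\<And>i. i \<in> {1..N} \<Longrightarrow>
      q i \<in> borel_measurable
        (gen_sigma M (\<lambda>w. \<lambda>j\<in>{1..N}. (E j w, Z j w)) (PiM {1..N} (\<lambda>_. borel \<Otimes>\<^sub>M SZ)))"
    and weights_nonneg: "AE w in M. \<forall>i\<in>{1..N}. E i w = 1 \<longrightarrow> q i w \<ge> 0"
    and weights_sum_1: "AE w in M. (\<Sum>i\<in>{i\<in>{1..N}. E i w = 1}. q i w) = 1"
    and weights_calibrated: "AE w in M. (\<Sum>i\<in>{i\<in>{1..N}. E i w = 1}. q i w *\<^sub>R b (Z i w)) = \<mu>b"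
begin

abbreviation enrolled_weight :: "nat \<Rightarrow> 'a \<Rightarrow> real" where
  "enrolled_weight i w \<equiv> if E i w = 1 then q i w else 0"

lemma weights_bounded: "AE w in M. \<forall>i\<in>{1..N}. E i w = 1 \<longrightarrow> 0 \<le> q i w \<and> q i w \<le> 1"
  using weights_nonneg weights_sum_1
proof eventually_elim
  case (elim w)
  have "q i w \<le> (\<Sum>i\<in>{i\<in>{1..N}. E i w = 1}. q i w)" if "i \<in> {1..N}" "E i w = 1" for i
    using elim(1) that by (intro member_le_sum) auto
  then show ?case using elim by auto
qed

lemma enrolled_weight_bounded: "i \<in> {1..N} \<Longrightarrow> AE w in M. \<bar>enrolled_weight i w\<bar> \<le> 1"
  using weights_bounded by eventually_elim auto

lemma measurable_enrollment_profile:
  assumes i: "i \<in> {1..N}"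
  shows "(\<lambda>w. \<lambda>j\<in>{1..N}. (E j w, Z j w))
    \<in> join_others (sigma_ZE i) i \<rightarrow>\<^sub>M PiM {1..N} (\<lambda>_. borel \<Otimes>\<^sub>M SZ)"
proof (rule measurable_restrict)
  fix j assume j: "j \<in> {1..N}"
  show "(\<lambda>w. (E j w, Z j w)) \<in> join_others (sigma_ZE i) i \<rightarrow>\<^sub>M borel \<Otimes>\<^sub>M SZ"
  proof (cases "j = i")
    case True
    note [measurable] = measurable_client_components[OF i]
    have "(\<lambda>w. (E i w, Z i w)) \<in> sigma_ZE i \<rightarrow>\<^sub>M borel \<Otimes>\<^sub>M SZ"
      unfolding gen_sigma_def
      by (rule measurable_vimage_algebra_factor[where h = "\<lambda>(z, e). (e, z)"]) auto
    moreover have "subalgebra (join_others (sigma_ZE i) i) (sigma_ZE i)"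
      by (simp add: subalgebra_join_algebra_left gen_sigma_def)
    ultimately show ?thesis
      using True by (auto intro: measurable_from_subalg)
  next
    case False
    have "(\<lambda>w. (\<lambda>(z, e, x, a, d). (e, z)) (client j w))
        \<in> clients_algebra ({1..N} - {i}) \<rightarrow>\<^sub>M borel \<Otimes>\<^sub>M SZ"
      using j False by (intro measurable_clients_algebra) auto
    moreover have "subalgebra (join_others (sigma_ZE i) i) (clients_algebra ({1..N} - {i}))"
      by (simp add: subalgebra_join_algebra_right gen_sigma_def)
    ultimately show ?thesis
      by (auto intro: measurable_from_subalg simp: client_def)
  qed
qed

lemma measurable_enrolled_weight:
  assumes i: "i \<in> {1..N}"
  shows "enrolled_weight i \<in> borel_measurable (join_others (sigma_ZE i) i)"
proof -
  note profile = measurable_enrollment_profile[OF i]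
  have "subalgebra (join_others (sigma_ZE i) i)
      (gen_sigma M (\<lambda>w. \<lambda>j\<in>{1..N}. (E j w, Z j w)) (PiM {1..N} (\<lambda>_. borel \<Otimes>\<^sub>M SZ)))"
    using subalgebra_vimage_algebra[OF profile] by (simp add: space_join_algebra gen_sigma_def)
  then have [measurable]: "q i \<in> borel_measurable (join_others (sigma_ZE i) i)"
    using measurable_weights[OF i] by (rule measurable_from_subalg)
  have "(\<lambda>w. fst ((\<lambda>j\<in>{1..N}. (E j w, Z j w)) i)) \<in> borel_measurable (join_others (sigma_ZE i) i)"
    using measurable_compose[OF profile measurable_component_singleton[OF i]] by measurable
  then have [measurable]: "E i \<in> borel_measurable (join_others (sigma_ZE i) i)"
    using i by simp
  show ?thesis by measurable
qed

lemma borel_measurable_weights: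
  assumes "i \<in> {1..N}"
  shows "q i \<in> borel_measurable M"
proof -
  have "(\<lambda>w. \<lambda>j\<in>{1..N}. (E j w, Z j w)) \<in> M \<rightarrow>\<^sub>M PiM {1..N} (\<lambda>_. borel \<Otimes>\<^sub>M SZ)"
    using measurable_client_components by (intro measurable_restrict measurable_Pair) auto
  from measurable_from_subalg[OF subalgebra_vimage_algebra[OF this]] show ?thesis
    using measurable_weights[OF assms] by (simp add: gen_sigma_def)
qed

lemma borel_measurable_weighted_update_norm:
  "(\<lambda>w. \<Sum>i\<in>{i\<in>{1..N}. A i w = 1}. q i w * norm (\<Delta> i w)) \<in> borel_measurable M"
proof -
  have "(\<lambda>w. \<Sum>i\<in>{1..N}. if A i w = 1 then q i w * norm (\<Delta> i w) else 0) \<in> borel_measurable M"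
  proof (rule borel_measurable_sum)
    fix i assume i: "i \<in> {1..N}"
    note [measurable] = measurable_client_components[OF i] borel_measurable_weights[OF i]
    show "(\<lambda>w. if A i w = 1 then q i w * norm (\<Delta> i w) else 0) \<in> borel_measurable M"
      by measurable
  qed
  then show ?thesis by (simp only: sum.inter_filter[symmetric] finite_atLeastAtMost)
qed

lemma sum_enrolled_weight_outcome_model:
  "AE w in M. (\<Sum>i\<in>{1..N}. enrolled_weight i w *\<^sub>R (B *v b (Z i w))) = B *v \<mu>b"
  using weights_calibrated
proof eventually_elim
  case (elim w)
  have "(\<Sum>i\<in>{1..N}. enrolled_weight i w *\<^sub>R (B *v b (Z i w)))
      = (\<Sum>i\<in>{1..N}. if E i w = 1 then q i w *\<^sub>R (B *v b (Z i w)) else 0)"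
    by (rule sum.cong) auto
  also have "\<dots> = B *v (\<Sum>i\<in>{i\<in>{1..N}. E i w = 1}. q i w *\<^sub>R b (Z i w))"
    by (simp add: sum.inter_filter[symmetric] linear_sum[OF matrix_vector_mul_linear]
        matrix_vector_mult_scaleR)
  finally show ?case using elim by simp
qed

lemma integrable_cal_est:
  assumes c: "0 < c"
    and p: "\<And>i. i \<in> {1..N} \<Longrightarrow> p i \<in> borel_measurable M"
      "\<And>i. i \<in> {1..N} \<Longrightarrow> AE w in M. E i w = 1 \<longrightarrow> c \<le> p i w"
  shows "integrable M (cal_est N A q p \<Delta>)"
proof -
  have "integrable M (\<lambda>w. if A i w = 1 then (q i w / p i w) *\<^sub>R \<Delta> i w else 0)"
    if i: "i \<in> {1..N}" for i
    using i c p(1)[OF i] borel_measurable_weights[OF i]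
  proof (rule integrable_ipw_term)
    show "AE w in M. E i w = 1 \<longrightarrow> c \<le> p i w \<and> \<bar>q i w\<bar> \<le> 1"
      using p(2)[OF i] weights_bounded by eventually_elim (use i in auto)
  qed
  then show ?thesis
    unfolding cal_est_eq_sum[abs_def] by (rule Bochner_Integration.integrable_sum)
qed

lemma integral_update:
  assumes i: "i \<in> {1..N}"
    and outcome: "AE w in M. vec_cond_exp M (sigma_Z i) (\<Delta> i) w = B *v b (Z i w)"
  shows "(\<integral>w. \<Delta> i w \<partial>M) = B *v \<mu>b"
proof -
  note [measurable] = measurable_client_components[OF i] measurable_b
  interpret F: finite_measure_subalgebra M "sigma_Z i"
    by unfold_locales (rule client_subalgebras(8)[OF i])
  have b_int: "integrable M (\<lambda>w. b (Z i w))" and b_mean: "(\<integral>w. b (Z i w) \<partial>M) = \<mu>b"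
    using mean_b[OF i] by (auto simp: has_bochner_integral_iff)
  have "(\<integral>w. \<Delta> i w \<partial>M) $ k = (B *v \<mu>b) $ k" for k
  proof -
    have "(\<integral>w. \<Delta> i w \<partial>M) $ k = (\<integral>w. real_cond_exp M (sigma_Z i) (\<lambda>w. \<Delta> i w $ k) w \<partial>M)"
      using integral_vec_nth[OF integrable_update[OF i]]
        F.real_cond_exp_int(2)[OF measurable_integrable_update_component(2)[OF i]]
      by simp
    also have "\<dots> = (\<integral>w. (B *v b (Z i w)) $ k \<partial>M)"
    proof (rule integral_cong_AE)
      show "AE w in M. real_cond_exp M (sigma_Z i) (\<lambda>w. \<Delta> i w $ k) w = (B *v b (Z i w)) $ k"
        using outcome by eventually_elim (simp flip: vec_cond_exp_nth)
    qed measurable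
    also have "\<dots> = (\<integral>w. B *v b (Z i w) \<partial>M) $ k"
      using integrable_bounded_linear[OF matrix_vector_mul_bounded_linear[of B] b_int]
      by (rule integral_vec_nth[symmetric])
    also have "\<dots> = (B *v \<mu>b) $ k"
      using integral_bounded_linear[OF matrix_vector_mul_bounded_linear[of B] b_int] b_mean by simp
    finally show ?thesis .
  qed
  then show ?thesis by (simp add: vec_eq_iff)
qed

lemma integral_cal_est_propensity:
  assumes c: "0 < c"
    and part_ign: "\<And>i. i \<in> {1..N} \<Longrightarrow> AE w in M. E i w = 1 \<and> A i w = 1 \<longrightarrow>
      vec_cond_exp M (sigma_ZXEA i) (\<Delta> i) w = vec_cond_exp M (sigma_ZXE i) (\<Delta> i) w"
    and overlap: "\<And>i. i \<in> {1..N} \<Longrightarrow> AE w in M. E i w = 1 \<longrightarrow> c \<le> propensity i w"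
    and enr_ign: "\<And>i. i \<in> {1..N} \<Longrightarrow> AE w in M. E i w = 1 \<longrightarrow>
      vec_cond_exp M (sigma_ZE i) (\<Delta> i) w = vec_cond_exp M (sigma_Z i) (\<Delta> i) w"
    and outcome: "\<And>i. i \<in> {1..N} \<Longrightarrow> AE w in M. vec_cond_exp M (sigma_Z i) (\<Delta> i) w = B *v b (Z i w)"
  shows "(\<integral>w. cal_est N A q propensity \<Delta> w \<partial>M) = B *v \<mu>b"
proof -
  let ?ipw = "\<lambda>i w. if A i w = 1 then (enrolled_weight i w / propensity i w) *\<^sub>R \<Delta> i w else 0"
  let ?model = "\<lambda>i w. enrolled_weight i w *\<^sub>R (B *v b (Z i w))"
  note [measurable] = measurable_b
  have W: "enrolled_weight i \<in> borel_measurable M" if "i \<in> {1..N}" for i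
    using measurable_join_others(2)[OF that measurable_enrolled_weight[OF that]] .
  have b_int: "integrable M (\<lambda>w. b (Z i w))" if "i \<in> {1..N}" for i
    using mean_b[OF that] by (simp add: has_bochner_integral_iff)
  have ipw_int: "integrable M (?ipw i)" if i: "i \<in> {1..N}" for i
    using i c _ W[OF i]
  proof (rule integrable_ipw_term)
    show "propensity i \<in> borel_measurable M" by (simp add: pi_part_def)
    show "AE w in M. E i w = 1 \<longrightarrow> c \<le> propensity i w \<and> \<bar>enrolled_weight i w\<bar> \<le> 1"
      using overlap[OF i] enrolled_weight_bounded[OF i] by eventually_elim auto
  qed
  have model_int: "integrable M (?model i)" if i: "i \<in> {1..N}" for i
    using integrable_bounded_linear[OF matrix_vector_mul_bounded_linear b_int[OF i]] W[OF i]
      enrolled_weight_bounded[OF i]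
    by (rule integrable_scaleR_bounded)
  have "(\<integral>w. cal_est N A q propensity \<Delta> w \<partial>M) = (\<integral>w. (\<Sum>i\<in>{1..N}. ?ipw i w) \<partial>M)"
    unfolding cal_est_eq_sum
    by (intro Bochner_Integration.integral_cong sum.cong refl)
      (auto simp: participating_imp_enrolled)
  also have "\<dots> = (\<Sum>i\<in>{1..N}. \<integral>w. ?ipw i w \<partial>M)"
    using ipw_int by (rule Bochner_Integration.integral_sum)
  also have "\<dots> = (\<Sum>i\<in>{1..N}. \<integral>w. ?model i w \<partial>M)"
    using integral_ipw_term_eq_outcome_model[OF _ c measurable_enrolled_weight enrolled_weight_bounded _
        part_ign overlap enr_ign outcome measurable_b b_int]
    by simp
  also have "\<dots> = (\<integral>w. (\<Sum>i\<in>{1..N}. ?model i w) \<partial>M)"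
    using model_int by (rule Bochner_Integration.integral_sum[symmetric])
  also have "\<dots> = (\<integral>w. B *v \<mu>b \<partial>M)"
    using sum_enrolled_weight_outcome_model W measurable_client_components
    by (intro integral_cong_AE) auto
  finally show ?thesis by (simp add: prob_space)
qed

lemma norm_cal_est_diff_le:
  assumes c: "0 < c"
    and bdd: "AE w in M. \<forall>i\<in>{1..N}. E i w = 1 \<longrightarrow> c \<le> p i w \<and> c \<le> p' i w \<and> \<bar>p i w - p' i w\<bar> \<le> D w"
  shows "AE w in M. norm (cal_est N A q p \<Delta> w - cal_est N A q p' \<Delta> w)
    \<le> (\<Sum>i\<in>{i\<in>{1..N}. A i w = 1}. q i w * norm (\<Delta> i w)) * D w / c\<^sup>2"
  using bdd weights_bounded AE_space
proof eventually_elim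
  case (elim w)
  have "norm (cal_est N A q p \<Delta> w - cal_est N A q p' \<Delta> w)
      = norm (\<Sum>i\<in>{i\<in>{1..N}. A i w = 1}. (q i w / p i w) *\<^sub>R \<Delta> i w - (q i w / p' i w) *\<^sub>R \<Delta> i w)"
    by (simp add: cal_est_def sum_subtractf)
  also have "\<dots> \<le> (\<Sum>i\<in>{i\<in>{1..N}. A i w = 1}.
      norm ((q i w / p i w) *\<^sub>R \<Delta> i w - (q i w / p' i w) *\<^sub>R \<Delta> i w))"
    by (rule norm_sum)
  also have "\<dots> \<le> (\<Sum>i\<in>{i\<in>{1..N}. A i w = 1}. q i w * norm (\<Delta> i w) * D w / c\<^sup>2)"
  proof (rule sum_mono)
    fix i assume "i \<in> {i\<in>{1..N}. A i w = 1}"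
    then have "i \<in> {1..N}" "E i w = 1"
      using participating_imp_enrolled elim(3) by auto
    then show "norm ((q i w / p i w) *\<^sub>R \<Delta> i w - (q i w / p' i w) *\<^sub>R \<Delta> i w)
        \<le> q i w * norm (\<Delta> i w) * D w / c\<^sup>2"
      using elim(1,2) by (intro norm_ipw_diff_le[OF c]) auto
  qed
  also have "\<dots> = (\<Sum>i\<in>{i\<in>{1..N}. A i w = 1}. q i w * norm (\<Delta> i w)) * D w / c\<^sup>2"
    by (simp add: sum_distrib_right sum_divide_distrib)
  finally show ?case .
qed

lemma norm_integral_cal_est_diff_le:
  assumes c: "0 < c"
    and p: "\<And>i. i \<in> {1..N} \<Longrightarrow> p i \<in> borel_measurable M" "\<And>i. i \<in> {1..N} \<Longrightarrow> p' i \<in> borel_measurable M"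
    and bdd: "AE w in M. \<forall>i\<in>{1..N}. E i w = 1 \<longrightarrow> c \<le> p i w \<and> c \<le> p' i w \<and> \<bar>p i w - p' i w\<bar> \<le> D w"
    and SD: "integrable M (\<lambda>w. (\<Sum>i\<in>{i\<in>{1..N}. A i w = 1}. q i w * norm (\<Delta> i w)) * D w)"
  shows "norm ((\<integral>w. cal_est N A q p \<Delta> w \<partial>M) - (\<integral>w. cal_est N A q p' \<Delta> w \<partial>M))
    \<le> (\<integral>w. (\<Sum>i\<in>{i\<in>{1..N}. A i w = 1}. q i w * norm (\<Delta> i w)) * D w \<partial>M) / c\<^sup>2"
proof -
  have "AE w in M. E i w = 1 \<longrightarrow> c \<le> p i w" "AE w in M. E i w = 1 \<longrightarrow> c \<le> p' i w" if "i \<in> {1..N}" for i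
    using bdd that by (auto elim!: eventually_mono)
  then have int: "integrable M (cal_est N A q p \<Delta>)" "integrable M (cal_est N A q p' \<Delta>)"
    using c p by (auto intro!: integrable_cal_est)
  have "norm ((\<integral>w. cal_est N A q p \<Delta> w \<partial>M) - (\<integral>w. cal_est N A q p' \<Delta> w \<partial>M))
      = norm (\<integral>w. cal_est N A q p \<Delta> w - cal_est N A q p' \<Delta> w \<partial>M)"
    using int by simp
  also have "\<dots> \<le> (\<integral>w. norm (cal_est N A q p \<Delta> w - cal_est N A q p' \<Delta> w) \<partial>M)"
    by (rule integral_norm_bound)
  also have "\<dots> \<le> (\<integral>w. (\<Sum>i\<in>{i\<in>{1..N}. A i w = 1}. q i w * norm (\<Delta> i w)) * D w / c\<^sup>2 \<partial>M)"
    using int SD norm_cal_est_diff_le[OF c bdd] by (intro integral_mono_AE) auto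
  also have "\<dots> = (\<integral>w. (\<Sum>i\<in>{i\<in>{1..N}. A i w = 1}. q i w * norm (\<Delta> i w)) * D w \<partial>M) / c\<^sup>2"
    by (rule integral_divide_zero)
  finally show ?thesis .
qed

lemma clients_nonempty: "1 \<le> N"
proof (rule ccontr)
  assume "\<not> 1 \<le> N"
  then have "AE w in M. False"
    using weights_sum_1 by simp
  then show False
    by (simp add: AE_False)
qed

lemma average_update:
  assumes outcome: "\<And>i. i \<in> {1..N} \<Longrightarrow> AE w in M. vec_cond_exp M (sigma_Z i) (\<Delta> i) w = B *v b (Z i w)"
  shows "(1 / real N) *\<^sub>R (\<Sum>i\<in>{1..N}. expectation (\<Delta> i)) = B *v \<mu>b"
proof -
  have "(\<Sum>i\<in>{1..N}. expectation (\<Delta> i)) = (\<Sum>i\<in>{1..N}. B *v \<mu>b)"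
    using integral_update[OF _ outcome] by simp
  then show ?thesis
    using clients_nonempty by (simp only: real_vector.sum_constant_scale card_atLeastAtMost) simp
qed

lemma norm_integral_cal_est_bias_le:
  assumes c: "0 < c"
    and part_ign: "\<And>i. i \<in> {1..N} \<Longrightarrow> AE w in M. E i w = 1 \<and> A i w = 1 \<longrightarrow>
      vec_cond_exp M (sigma_ZXEA i) (\<Delta> i) w = vec_cond_exp M (sigma_ZXE i) (\<Delta> i) w"
    and overlap: "\<And>i. i \<in> {1..N} \<Longrightarrow> AE w in M. E i w = 1 \<longrightarrow> c \<le> propensity i w"
    and enr_ign: "\<And>i. i \<in> {1..N} \<Longrightarrow> AE w in M. E i w = 1 \<longrightarrow>
      vec_cond_exp M (sigma_ZE i) (\<Delta> i) w = vec_cond_exp M (sigma_Z i) (\<Delta> i) w"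
    and outcome: "\<And>i. i \<in> {1..N} \<Longrightarrow> AE w in M. vec_cond_exp M (sigma_Z i) (\<Delta> i) w = B *v b (Z i w)"
    and p: "\<And>i. i \<in> {1..N} \<Longrightarrow> p i \<in> borel_measurable M"
      "\<And>i. i \<in> {1..N} \<Longrightarrow> AE w in M. E i w = 1 \<longrightarrow> c \<le> p i w \<and> p i w \<le> 1"
    and S: "integrable M (\<lambda>w. (\<Sum>i\<in>{i\<in>{1..N}. A i w = 1}. q i w * norm (\<Delta> i w))\<^sup>2)"
  defines "D w \<equiv> Max (insert 0 ((\<lambda>i. \<bar>p i w - propensity i w\<bar>) ` {i\<in>{1..N}. E i w = 1}))"
  shows "norm ((\<integral>w. cal_est N A q p \<Delta> w \<partial>M) - B *v \<mu>b)
    \<le> (\<integral>w. (\<Sum>i\<in>{i\<in>{1..N}. A i w = 1}. q i w * norm (\<Delta> i w)) * D w \<partial>M) / c\<^sup>2"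
proof -
  have D: "AE w in M. 0 \<le> D w \<and> D w \<le> 1 \<and> (\<forall>i\<in>{1..N}. E i w = 1 \<longrightarrow>
      c \<le> p i w \<and> c \<le> propensity i w \<and> \<bar>p i w - propensity i w\<bar> \<le> D w)"
    unfolding D_def using p(2) overlap c by (rule max_deviation_bounds)
  have "integrable M (\<lambda>w. (\<Sum>i\<in>{i\<in>{1..N}. A i w = 1}. q i w * norm (\<Delta> i w)) * D w)"
  proof (rule integrable_mult_bounded)
    show "integrable M (\<lambda>w. \<Sum>i\<in>{i\<in>{1..N}. A i w = 1}. q i w * norm (\<Delta> i w))"
      by (rule square_integrable_imp_integrable[OF borel_measurable_weighted_update_norm S])
    show "D \<in> borel_measurable M"
      unfolding D_def by (rule borel_measurable_max_deviation[OF p(1)])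
    show "AE w in M. \<bar>D w\<bar> \<le> 1"
      using D by eventually_elim auto
  qed
  moreover have "AE w in M. \<forall>i\<in>{1..N}. E i w = 1 \<longrightarrow>
      c \<le> p i w \<and> c \<le> propensity i w \<and> \<bar>p i w - propensity i w\<bar> \<le> D w"
    using D by eventually_elim auto
  ultimately show ?thesis
    using norm_integral_cal_est_diff_le[OF c, where p = p and p' = propensity and D = D] p(1)
      integral_cal_est_propensity[OF c part_ign overlap enr_ign outcome]
    by (simp add: pi_part_def)
qed

end

theorem mainTheorem4:
  fixes M :: "'a measure" and SZ :: "'z measure" and SX :: "'x measure"
    and N :: nat
    and Z :: "nat \<Rightarrow> 'a \<Rightarrow> 'z" and X :: "nat \<Rightarrow> 'a \<Rightarrow> 'x"
    and E :: "nat \<Rightarrow> 'a \<Rightarrow> real" and A :: "nat \<Rightarrow> 'a \<Rightarrow> real"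
    and \<Delta> :: "nat \<Rightarrow> 'a \<Rightarrow> real^'m"
    and b :: "'z \<Rightarrow> real^'q" and \<mu>b :: "real^'q"
    and q :: "nat \<Rightarrow> 'a \<Rightarrow> real"
    and pihat :: "nat \<Rightarrow> nat \<Rightarrow> 'a \<Rightarrow> real"
    and c :: real
  assumes P: "prob_space M"
    and indep: "prob_space.indep_vars M (\<lambda>_. SZ \<Otimes>\<^sub>M borel \<Otimes>\<^sub>M SX \<Otimes>\<^sub>M borel \<Otimes>\<^sub>M borel)
                  (\<lambda>i w. (Z i w, E i w, X i w, A i w, \<Delta> i w)) {1..N}"
    and E01: "\<And>i w. i \<in> {1..N} \<Longrightarrow> w \<in> space M \<Longrightarrow> E i w \<in> {0, 1}"
    and A01: "\<And>i w. i \<in> {1..N} \<Longrightarrow> w \<in> space M \<Longrightarrow> A i w \<in> {0, 1}"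
    and AE0: "\<And>i w. i \<in> {1..N} \<Longrightarrow> w \<in> space M \<Longrightarrow> E i w = 0 \<Longrightarrow> A i w = 0"
    and \<Delta>_int: "\<And>i. i \<in> {1..N} \<Longrightarrow> integrable M (\<Delta> i)"
    and b_meas: "b \<in> borel_measurable SZ"
    and b_mean: "\<And>i. i \<in> {1..N} \<Longrightarrow> has_bochner_integral M (\<lambda>w. b (Z i w)) \<mu>b"
    and q_meas: "\<And>i. i \<in> {1..N} \<Longrightarrow>
        q i \<in> borel_measurable (gen_sigma M (\<lambda>w. \<lambda>j\<in>{1..N}. (E j w, Z j w))
                                       (PiM {1..N} (\<lambda>_. borel \<Otimes>\<^sub>M SZ)))"
    and q_nonneg: "AE w in M. \<forall>i\<in>{1..N}. E i w = 1 \<longrightarrow> q i w \<ge> 0"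
    and q_sum: "AE w in M. (\<Sum>i\<in>{i\<in>{1..N}. E i w = 1}. q i w) = 1"
    and q_cal: "AE w in M. (\<Sum>i\<in>{i\<in>{1..N}. E i w = 1}. q i w *\<^sub>R b (Z i w)) = \<mu>b"
    and pihat_meas: "\<And>n i. i \<in> {1..N} \<Longrightarrow> pihat n i \<in> borel_measurable M"
    and part_ign: "\<And>i. i \<in> {1..N} \<Longrightarrow> AE w in M. E i w = 1 \<and> A i w = 1 \<longrightarrow>
        vec_cond_exp M (gen_sigma M (\<lambda>v. (Z i v, X i v, E i v, A i v))
                          (SZ \<Otimes>\<^sub>M SX \<Otimes>\<^sub>M borel \<Otimes>\<^sub>M borel)) (\<Delta> i) w
      = vec_cond_exp M (gen_sigma M (\<lambda>v. (Z i v, X i v, E i v))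
                          (SZ \<Otimes>\<^sub>M SX \<Otimes>\<^sub>M borel)) (\<Delta> i) w"
    and enr_ign: "\<And>i. i \<in> {1..N} \<Longrightarrow> AE w in M. E i w = 1 \<longrightarrow>
        vec_cond_exp M (gen_sigma M (\<lambda>v. (Z i v, E i v)) (SZ \<Otimes>\<^sub>M borel)) (\<Delta> i) w
      = vec_cond_exp M (gen_sigma M (Z i) SZ) (\<Delta> i) w"
    and moment_suff: "\<exists>B :: real^'q^'m. \<forall>i\<in>{1..N}. AE w in M.
        vec_cond_exp M (gen_sigma M (Z i) SZ) (\<Delta> i) w = B *v b (Z i w)"
    and c_pos: "c > 0"
    and overlap: "\<And>i. i \<in> {1..N} \<Longrightarrow> AE w in M. E i w = 1 \<longrightarrow> pi_part M SZ SX Z X E A i w \<ge> c"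
    and pihat_bds: "\<And>n i. i \<in> {1..N} \<Longrightarrow> AE w in M. E i w = 1 \<longrightarrow> c \<le> pihat n i w \<and> pihat n i w \<le> 1"
    and consist: "(\<lambda>n. prob_space.expectation M (\<lambda>w.
        Max (insert 0 ((\<lambda>i. \<bar>pihat n i w - pi_part M SZ SX Z X E A i w\<bar>) ` {i\<in>{1..N}. E i w = 1}))))
        \<longlonglongrightarrow> 0"
    and bdd_moment: "integrable M (\<lambda>w. (\<Sum>i\<in>{i\<in>{1..N}. A i w = 1}. q i w * norm (\<Delta> i w))\<^sup>2)"
  shows "(\<lambda>n. prob_space.expectation M (cal_est N A q (pihat n) \<Delta>)
              - (1 / real N) *\<^sub>R (\<Sum>i\<in>{1..N}. prob_space.expectation M (\<Delta> i))) \<longlonglongrightarrow> 0"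
proof -
  interpret calibrated_round M SZ SX N Z X E A \<Delta> b \<mu>b q
    by (intro calibrated_round.intro client_round.intro client_round_axioms.intro
        calibrated_round_axioms.intro) (fact assms)+
  obtain B where outcome:
    "\<And>i. i \<in> {1..N} \<Longrightarrow> AE w in M. vec_cond_exp M (sigma_Z i) (\<Delta> i) w = B *v b (Z i w)"
    using moment_suff by blast
  define S where "S = (\<lambda>w. \<Sum>i\<in>{i\<in>{1..N}. A i w = 1}. q i w * norm (\<Delta> i w))"
  define D where
    "D n w = Max (insert 0 ((\<lambda>i. \<bar>pihat n i w - propensity i w\<bar>) ` {i\<in>{1..N}. E i w = 1}))"
    for n w
  have bound: "norm (expectation (cal_est N A q (pihat n) \<Delta>) - B *v \<mu>b) \<le> (\<integral>w. S w * D n w \<partial>M) / c\<^sup>2"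
    for n
    unfolding S_def D_def
    using c_pos part_ign overlap enr_ign outcome pihat_meas[where n = n] pihat_bds[where n = n]
      bdd_moment
    by (rule norm_integral_cal_est_bias_le)
  have lim: "(\<lambda>n. \<integral>w. S w * D n w \<partial>M) \<longlonglongrightarrow> 0"
  proof (rule tendsto_integral_mult_vanishing)
    show "S \<in> borel_measurable M" "integrable M (\<lambda>w. (S w)\<^sup>2)"
      using borel_measurable_weighted_update_norm bdd_moment by (simp_all add: S_def)
    show "D n \<in> borel_measurable M" for n
      unfolding D_def using pihat_meas by (rule borel_measurable_max_deviation)
    show "AE w in M. 0 \<le> D n w \<and> D n w \<le> 1" for n
      using max_deviation_bounds[where p = "pihat n", OF pihat_bds overlap c_pos]
      by (auto simp: D_def elim: eventually_mono)
    show "(\<lambda>n. \<integral>w. D n w \<partial>M) \<longlonglongrightarrow> 0"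
      using consist by (simp add: D_def)
  qed
  have mean: "(1 / real N) *\<^sub>R (\<Sum>i\<in>{1..N}. expectation (\<Delta> i)) = B *v \<mu>b"
    using outcome by (rule average_update)
  show ?thesis
    unfolding mean
    using always_eventually[OF allI[OF bound]] tendsto_divide_zero[OF lim]
    by (rule Lim_null_comparison)
qed

end
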